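(* Let $(X,w)$ be a weighted system in a real Euclidean affine space $\mathbb{A}$ with $\mu_0=0$. The following are equivalent: (i) $\mu_1(p)=\overrightarrow{O}$ for all $p\in\mathbb{A}$; (ii) $\mu_2$ is constant on $\mathbb{A}$; (iii) the restriction of $\mu_2$ to $X$ is constant.
   Context: A weighted system is a finite set $X\subset\mathbb{A}$ with $w:X\to\mathbb{R}$. $\mu_0=\sum_xw(x)$, $\mu_1(p)=\sum_xw(x)\overrightarrow{px}$, $\mu_2(p)=\sum_xw(x)\overrightarrow{px}^2$, where the square of a vector is its inner product with itself. *)

theory Defs
  imports "HOL-Analysis.Analysis"
begin

text \<open>The Euclidean affine space is modelled by a type of class euclidean_space;
  the vector from p to x is x - p, and the square of a vector is its inner product
  with itself. A weighted system is a finite set X with weights w (only values on X matter).\<close>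

definition mu0 :: "'a set \<Rightarrow> ('a \<Rightarrow> real) \<Rightarrow> real" where
  "mu0 X w = (\<Sum>x\<in>X. w x)"

definition mu1 :: "'a::euclidean_space set \<Rightarrow> ('a \<Rightarrow> real) \<Rightarrow> 'a \<Rightarrow> 'a" where
  "mu1 X w p = (\<Sum>x\<in>X. w x *\<^sub>R (x - p))"

definition mu2 :: "'a::euclidean_space set \<Rightarrow> ('a \<Rightarrow> real) \<Rightarrow> 'a \<Rightarrow> real" where
  "mu2 X w p = (\<Sum>x\<in>X. w x * ((x - p) \<bullet> (x - p)))"

end

theory Submission
  imports Defs
begin

text \<open>Write \<open>s = (\<Sum>x\<in>X. w x *\<^sub>R x)\<close>. When \<open>mu0 X w = 0\<close>, \<open>mu1\<close> is the constant \<open>s\<close> and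
  \<open>mu2 p = A - 2 (p \<bullet> s)\<close> is affine, so \<open>mu2\<close> is constant exactly when \<open>s = 0\<close>.
  For the values on \<open>X\<close> alone, averaging against the weights gives
  \<open>(\<Sum>x\<in>X. w x * mu2 X w x) = -2 (s \<bullet> s)\<close>, whereas a constant value \<open>c\<close> on \<open>X\<close>
  contributes \<open>c * mu0 X w = 0\<close>; hence again \<open>s = 0\<close>.\<close>

lemma mu1_eq: "mu1 X w p = (\<Sum>x\<in>X. w x *\<^sub>R x) - mu0 X w *\<^sub>R p"
  unfolding mu1_def mu0_def
  by (simp add: scaleR_diff_right sum_subtractf scaleR_sum_left)

lemma mu2_eq:
  "mu2 X w p = (\<Sum>x\<in>X. w x * (x \<bullet> x)) - 2 * (p \<bullet> (\<Sum>x\<in>X. w x *\<^sub>R x)) + mu0 X w * (p \<bullet> p)"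
proof -
  have "mu2 X w p = (\<Sum>x\<in>X. w x * (x \<bullet> x) - 2 * (p \<bullet> (w x *\<^sub>R x)) + w x * (p \<bullet> p))"
    unfolding mu2_def
    by (rule sum.cong) (auto simp: inner_diff_left inner_diff_right inner_commute algebra_simps)
  then show ?thesis
    by (simp add: mu0_def sum.distrib sum_subtractf sum_distrib_left sum_distrib_right inner_sum_right)
qed

lemma mu2_const_iff_moment_zero:
  assumes "mu0 X w = 0"
  shows "(\<exists>c. \<forall>p. mu2 X w p = c) \<longleftrightarrow> (\<Sum>x\<in>X. w x *\<^sub>R x) = 0"
proof
  let ?s = "\<Sum>x\<in>X. w x *\<^sub>R x"
  assume "\<exists>c. \<forall>p. mu2 X w p = c"
  then have "mu2 X w ?s = mu2 X w 0" by auto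
  then have "?s \<bullet> ?s = 0" by (simp add: mu2_eq assms)
  then show "?s = 0" by simp
qed (simp add: mu2_eq assms)

lemma weighted_sum_mu2:
  assumes "mu0 X w = 0"
  shows "(\<Sum>x\<in>X. w x * mu2 X w x) = -2 * ((\<Sum>x\<in>X. w x *\<^sub>R x) \<bullet> (\<Sum>x\<in>X. w x *\<^sub>R x))"
proof -
  let ?s = "\<Sum>x\<in>X. w x *\<^sub>R x" and ?A = "\<Sum>x\<in>X. w x * (x \<bullet> x)"
  have "(\<Sum>x\<in>X. w x * mu2 X w x) = (\<Sum>x\<in>X. w x * ?A - 2 * ((w x *\<^sub>R x) \<bullet> ?s))"
    by (simp add: mu2_eq assms algebra_simps)
  also have "\<dots> = mu0 X w * ?A - 2 * (?s \<bullet> ?s)"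
    by (simp add: mu0_def sum_subtractf sum_distrib_left[symmetric] sum_distrib_right[symmetric]
        inner_sum_left)
  finally show ?thesis by (simp add: assms)
qed

lemma mu2_const_on_iff_moment_zero:
  assumes "mu0 X w = 0"
  shows "(\<exists>c. \<forall>x\<in>X. mu2 X w x = c) \<longleftrightarrow> (\<Sum>x\<in>X. w x *\<^sub>R x) = 0"
proof
  let ?s = "\<Sum>x\<in>X. w x *\<^sub>R x"
  assume "\<exists>c. \<forall>x\<in>X. mu2 X w x = c"
  then obtain c where "\<forall>x\<in>X. mu2 X w x = c" by blast
  then have "(\<Sum>x\<in>X. w x * mu2 X w x) = mu0 X w * c"
    by (simp add: mu0_def sum_distrib_right)
  then have "?s \<bullet> ?s = 0" by (simp add: weighted_sum_mu2 assms)
  then show "?s = 0" by simp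
qed (use mu2_const_iff_moment_zero[OF assms] in auto)

theorem corollary2p5:
  fixes X :: "'a::euclidean_space set" and w :: "'a \<Rightarrow> real"
  assumes "finite X" and "mu0 X w = 0"
  shows "((\<forall>p. mu1 X w p = 0) \<longleftrightarrow> (\<exists>c. \<forall>p. mu2 X w p = c))
       \<and> ((\<exists>c. \<forall>p. mu2 X w p = c) \<longleftrightarrow> (\<exists>c. \<forall>x\<in>X. mu2 X w x = c))"
  using mu2_const_iff_moment_zero[OF assms(2)] mu2_const_on_iff_moment_zero[OF assms(2)]
  by (simp add: mu1_eq assms(2))

end
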